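(* Work in the projective model of $\mathbf{Sol}$ geometry described in the context. Let $P_1=(1,0,0,0)$, $P_2=(1,a,b,c)$ and $P_3=(1,d,e,f)$. For a point $P=(1,x,y,z)$ let $P^i=\mathbf{T}_P^{-1}(P_i)$, i.e. $P^1=(1,-xe^{z},-ye^{-z},-z)$, $P^2=(1,(a-x)e^{z},(b-y)e^{-z},c-z)$, $P^3=(1,(d-x)e^{z},(e-y)e^{-z},f-z)$. Then the translation-like triangular surface $S^{\mathbf{Sol},t}_{P_1,P_2,P_3}$ has the equation \[ 0=\mathbf{t}(P^1)\cdot\mathbf{t}(P^2)\cdot\mathbf{t}(P^3)=\frac{z(z-c)(z-f)}{(1-e^{-z})(e^z-e^c)(e^z-e^f)}\Big((e^z-1)(bde^f-aee^c)+(e^f-1)(aye^c-bxe^z)+(e^c-1)(exe^z-dye^f)\Big), \] where $\mathbf{t}(P^1)\cdot\mathbf{t}(P^2)\cdot\mathbf{t}(P^3)$ denotes the Euclidean triple product (determinant) of the three vectors.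
   Context: $\mathbf{Sol}$ is modelled on $\mathbb{R}^3$ with points in homogeneous coordinates $(1,x,y,z)$. For $Q=(1,q_1,q_2,q_3)$ the translation $\mathbf{T}_Q$ acts on row vectors from the right by the matrix $\begin{pmatrix}1&q_1&q_2&q_3\\0&e^{-q_3}&0&0\\0&0&e^{q_3}&0\\0&0&0&1\end{pmatrix}$, mapping $E_0=(1,0,0,0)$ to $Q$. A translation curve from $E_0$ with unit initial tangent $(u,v,w)$ is $x(t)=-\frac uw(e^{-wt}-1)$, $y(t)=\frac vw(e^{wt}-1)$, $z(t)=wt$ (for $w\ne0$; $x=ut,y=vt,z=0$ if $w=0$); translation curves from $Q$ are their $\mathbf{T}_Q$-images, and the translation distance $d^t(Q,P)$ is the length of the translation curve segment from $Q$ to $P$. For a point $(1,x,y,z)$ with $z\ne0$, $\mathbf{t}(x,y,z):=\big(\frac{xz}{1-e^{-z}},\frac{yz}{e^z-1},z\big)$; this equals $d^t(E_0,(1,x,y,z))$ times the unit initial tangent vector at $E_0$ of the translation curve from $E_0$ to $(1,x,y,z)$. The translation-like triangular surface $S^{\mathbf{Sol},t}_{P_1,P_2,P_3}$ is the set of points $P$ such that the tangent vectors at $P$ of the translation curves from $P$ to $P_1,P_2,P_3$ are coplanar; equivalently (pulling back by $\mathbf{T}_P^{-1}$) such that the vectors $\mathbf{t}(P^1),\mathbf{t}(P^2),\mathbf{t}(P^3)$ are linearly dependent. *)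

theory Defs
  imports "HOL-Analysis.Analysis"
begin

text \<open>Points of Sol in homogeneous coordinates (1,x,y,z) are represented by their
affine coordinate triples (x,y,z).  The translation T_Q for Q = (1,q1,q2,q3) acts on
row vectors from the right by the matrix given in the paper, i.e.
(1,x,y,z) maps to (1, q1 + x e^(-q3), q2 + y e^(q3), q3 + z).\<close>

definition sol_trans :: "real \<times> real \<times> real \<Rightarrow> real \<times> real \<times> real \<Rightarrow> real \<times> real \<times> real" where
  "sol_trans Q p = (case Q of (q1, q2, q3) \<Rightarrow> case p of (x, y, z) \<Rightarrow>
      (q1 + x * exp (- q3), q2 + y * exp q3, q3 + z))"

text \<open>The vector t(x,y,z) (defined in the paper for z \<noteq> 0; for z = 0 we use the
value (x,y,0) given by the straight translation curve).\<close>

definition sol_t :: "real \<times> real \<times> real \<Rightarrow> real^3" where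
  "sol_t p = (case p of (x, y, z) \<Rightarrow>
      if z = 0 then vector [x, y, 0]
      else vector [x * z / (1 - exp (- z)), y * z / (exp z - 1), z])"

definition triple_prod :: "real^3 \<Rightarrow> real^3 \<Rightarrow> real^3 \<Rightarrow> real" where
  "triple_prod u v w = det (vector [u, v, w] :: real^3^3)"

text \<open>Translation-like triangular surface, via the pulled-back characterisation:
P lies on it iff t(T_P^-1 P1), t(T_P^-1 P2), t(T_P^-1 P3) are linearly dependent.\<close>

definition lin_dep3 :: "real^3 \<Rightarrow> real^3 \<Rightarrow> real^3 \<Rightarrow> bool" where
  "lin_dep3 u v w = (\<exists>l1 l2 l3. (l1, l2, l3) \<noteq> (0, 0, 0) \<and> l1 *\<^sub>R u + l2 *\<^sub>R v + l3 *\<^sub>R w = 0)"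

definition sol_tri_surface ::
  "real \<times> real \<times> real \<Rightarrow> real \<times> real \<times> real \<Rightarrow> real \<times> real \<times> real \<Rightarrow> (real \<times> real \<times> real) set" where
  "sol_tri_surface P1 P2 P3 = {P. lin_dep3 (sol_t (inv (sol_trans P) P1))
       (sol_t (inv (sol_trans P) P2)) (sol_t (inv (sol_trans P) P3))}"

end

theory Submission
  imports Defs
begin

text \<open>Pulled back by T_P^-1, a vertex Q = (q1, q2, q3) becomes
  ((q1 - x) e^z, (q2 - y) e^-z, q3 - z), and for q3 \<noteq> z its vector t is 1 / (e^q3 - e^z)
  times a vector that is polynomial in the coordinates and the exponentials.  The triple
  product is trilinear, so these scalars factor out, and for P1 = 0 the remaining determinant
  is -e^z z (z - c) (z - f) times the bracket of the claimed equation.\<close>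

lemma lin_dep3_iff_triple_prod_eq_0: "lin_dep3 u v w \<longleftrightarrow> triple_prod u v w = 0"
proof -
  let ?M = "vector [u, v, w] :: real^3^3"
  have combination: "transpose ?M *v l = l$1 *\<^sub>R u + l$2 *\<^sub>R v + l$3 *\<^sub>R w" for l
    by (simp add: vec_eq_iff matrix_vector_mult_def transpose_def sum_3 mult.commute)
  have "triple_prod u v w = 0 \<longleftrightarrow> \<not> invertible (transpose ?M)"
    unfolding triple_prod_def by (simp add: invertible_det_nz)
  also have "\<dots> \<longleftrightarrow> (\<exists>l. l \<noteq> 0 \<and> transpose ?M *v l = 0)"
    unfolding invertible_left_inverse matrix_left_invertible_ker by blast
  also have "\<dots> \<longleftrightarrow> lin_dep3 u v w"
    unfolding lin_dep3_def combination
  proof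
    assume "\<exists>l::real^3. l \<noteq> 0 \<and> l$1 *\<^sub>R u + l$2 *\<^sub>R v + l$3 *\<^sub>R w = 0"
    then obtain l :: "real^3"
      where "l \<noteq> 0" "l$1 *\<^sub>R u + l$2 *\<^sub>R v + l$3 *\<^sub>R w = 0"
      by blast
    then show "\<exists>l1 l2 l3. (l1, l2, l3) \<noteq> (0, 0, 0) \<and> l1 *\<^sub>R u + l2 *\<^sub>R v + l3 *\<^sub>R w = 0"
      by (intro exI[of _ "l$1"] exI[of _ "l$2"] exI[of _ "l$3"]) (auto simp: vec_eq_iff forall_3)
  next
    assume "\<exists>l1 l2 l3. (l1, l2, l3) \<noteq> (0, 0, 0) \<and> l1 *\<^sub>R u + l2 *\<^sub>R v + l3 *\<^sub>R w = 0"
    then obtain l1 l2 l3 :: real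
      where "(l1, l2, l3) \<noteq> (0, 0, 0)" "l1 *\<^sub>R u + l2 *\<^sub>R v + l3 *\<^sub>R w = 0"
      by blast
    then show "\<exists>l::real^3. l \<noteq> 0 \<and> l$1 *\<^sub>R u + l$2 *\<^sub>R v + l$3 *\<^sub>R w = 0"
      by (intro exI[of _ "vector [l1, l2, l3] :: real^3"]) (auto simp: vec_eq_iff forall_3)
  qed
  finally show ?thesis by simp
qed

lemma triple_prod_scaleR:
  "triple_prod (r *\<^sub>R u) (s *\<^sub>R v) (t *\<^sub>R w) = r * s * t * triple_prod u v w"
  by (simp add: triple_prod_def det_3 algebra_simps)

lemma inv_sol_trans:
  "inv (sol_trans (x, y, z)) (q1, q2, q3) = ((q1 - x) * exp z, (q2 - y) * exp (- z), q3 - z)"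
proof -
  have "inj (sol_trans (x, y, z))"
    by (auto simp: inj_def sol_trans_def)
  moreover have
    "sol_trans (x, y, z) ((q1 - x) * exp z, (q2 - y) * exp (- z), q3 - z) = (q1, q2, q3)"
    by (simp add: sol_trans_def mult.assoc flip: exp_add)
  ultimately show ?thesis
    by (metis inv_f_f)
qed

definition sol_t_pullback_scaled ::
    "real \<times> real \<times> real \<Rightarrow> real \<times> real \<times> real \<Rightarrow> real^3" where
  "sol_t_pullback_scaled P Q = (case P of (x, y, z) \<Rightarrow> case Q of (q1, q2, q3) \<Rightarrow>
     vector [(q1 - x) * exp z * exp q3 * (q3 - z), (q2 - y) * (q3 - z),
       (q3 - z) * (exp q3 - exp z)])"

lemma sol_t_pullback:
  assumes "q3 \<noteq> z"
  shows "sol_t (inv (sol_trans (x, y, z)) (q1, q2, q3))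
    = inverse (exp q3 - exp z) *\<^sub>R sol_t_pullback_scaled (x, y, z) (q1, q2, q3)"
proof -
  define E Q where "E = exp z" and "Q = exp q3"
  have "E > 0" "Q > 0" "Q \<noteq> E"
    using assms by (simp_all add: E_def Q_def)
  then have first:
      "(q1 - x) * E * (q3 - z) / (1 - E / Q) = inverse (Q - E) * ((q1 - x) * E * Q * (q3 - z))"
    and second:
      "(q2 - y) * (1 / E) * (q3 - z) / (Q / E - 1) = inverse (Q - E) * ((q2 - y) * (q3 - z))"
    and third: "q3 - z = inverse (Q - E) * ((q3 - z) * (Q - E))"
    by (simp_all add: field_simps)
  have exps: "exp (- z) = 1 / E" "exp (- (q3 - z)) = E / Q" "exp (q3 - z) = Q / E"
    by (simp_all add: E_def Q_def exp_minus exp_diff field_simps)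
  have "sol_t (inv (sol_trans (x, y, z)) (q1, q2, q3))
      = vector [(q1 - x) * exp z * (q3 - z) / (1 - exp (- (q3 - z))),
          (q2 - y) * exp (- z) * (q3 - z) / (exp (q3 - z) - 1), q3 - z]"
    using assms by (simp only: inv_sol_trans sol_t_def prod.case right_minus_eq if_False)
  also have "\<dots> = vector [(q1 - x) * E * (q3 - z) / (1 - E / Q),
      (q2 - y) * (1 / E) * (q3 - z) / (Q / E - 1), q3 - z]"
    unfolding exps E_def[symmetric] ..
  also have "\<dots> = inverse (Q - E) *\<^sub>R
      vector [(q1 - x) * E * Q * (q3 - z), (q2 - y) * (q3 - z), (q3 - z) * (Q - E)]"
    unfolding first second by (subst third) (simp add: vec_eq_iff forall_3)
  finally show ?thesis
    by (simp add: sol_t_pullback_scaled_def E_def Q_def)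
qed

lemma triple_prod_sol_t_pullback_scaled:
  "triple_prod (sol_t_pullback_scaled (x, y, z) (0, 0, 0))
      (sol_t_pullback_scaled (x, y, z) (a, b, c)) (sol_t_pullback_scaled (x, y, z) (d, e, f))
    = - exp z * (z * (z - c) * (z - f)) *
      ((exp z - 1) * (b * d * exp f - a * e * exp c) + (exp f - 1) * (a * y * exp c - b * x * exp z)
       + (exp c - 1) * (e * x * exp z - d * y * exp f))"
  unfolding triple_prod_def sol_t_pullback_scaled_def det_3 by simp algebra

theorem lemma4p2:
  fixes a b c d e f x y z :: real
  assumes "z \<noteq> 0" and "z \<noteq> c" and "z \<noteq> f"
  defines "P \<equiv> (x, y, z)"
  defines "RHS \<equiv> z * (z - c) * (z - f) / ((1 - exp (- z)) * (exp z - exp c) * (exp z - exp f)) *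
      ((exp z - 1) * (b * d * exp f - a * e * exp c) + (exp f - 1) * (a * y * exp c - b * x * exp z)
       + (exp c - 1) * (e * x * exp z - d * y * exp f))"
  shows "inv (sol_trans P) (0, 0, 0) = (- x * exp z, - y * exp (- z), - z)
    \<and> inv (sol_trans P) (a, b, c) = ((a - x) * exp z, (b - y) * exp (- z), c - z)
    \<and> inv (sol_trans P) (d, e, f) = ((d - x) * exp z, (e - y) * exp (- z), f - z)
    \<and> triple_prod (sol_t (inv (sol_trans P) (0, 0, 0))) (sol_t (inv (sol_trans P) (a, b, c)))
        (sol_t (inv (sol_trans P) (d, e, f))) = RHS
    \<and> (P \<in> sol_tri_surface (0, 0, 0) (a, b, c) (d, e, f) \<longleftrightarrow> RHS = 0)"
proof -
  have "0 \<noteq> z" "c \<noteq> z" "f \<noteq> z"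
    using assms(1-3) by auto
  then have "triple_prod (sol_t (inv (sol_trans P) (0, 0, 0))) (sol_t (inv (sol_trans P) (a, b, c)))
      (sol_t (inv (sol_trans P) (d, e, f)))
    = inverse (exp 0 - exp z) * inverse (exp c - exp z) * inverse (exp f - exp z) *
      triple_prod (sol_t_pullback_scaled P (0, 0, 0)) (sol_t_pullback_scaled P (a, b, c))
        (sol_t_pullback_scaled P (d, e, f))"
    unfolding P_def by (simp only: sol_t_pullback simp_thms triple_prod_scaleR)
  also have "\<dots> = RHS"
  proof -
    have rescale: "inverse (1 - E) * inverse (C - E) * inverse (F - E) * (- E * Z * K)
        = Z / ((1 - inverse E) * (E - C) * (E - F)) * K"
      if "E > 0" "1 - E \<noteq> 0" "C - E \<noteq> 0" "F - E \<noteq> 0" for E C F Z K :: real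
      using that by (simp add: divide_simps) algebra
    show ?thesis
      unfolding P_def triple_prod_sol_t_pullback_scaled RHS_def exp_zero exp_minus
      using assms(1-3) by (intro rescale) auto
  qed
  finally have "triple_prod (sol_t (inv (sol_trans P) (0, 0, 0)))
      (sol_t (inv (sol_trans P) (a, b, c))) (sol_t (inv (sol_trans P) (d, e, f))) = RHS" .
  then show ?thesis
    unfolding P_def sol_tri_surface_def
    by (simp add: inv_sol_trans lin_dep3_iff_triple_prod_eq_0)
qed

end
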